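(* Let $K$ be a simplex in a topological vector space $F$ and let $T:K\to 2^{K}$ be a correspondence with *-weakly convex graph. Then there exists $x^*\in K$ such that $x^*\in\overline{T}(x^* )$.
   Context: A simplex is the convex hull of a finite affinely independent set. For $T:X\to 2^Y$: $\mathrm{Gr}(T)=\{(x,y)\in X\times Y:y\in T(x)\}$; $\overline{T}(x)=\{y\in Y:(x,y)\in\mathrm{cl}_{X\times Y}\mathrm{Gr}(T)\}$; for $V\subset F$, $T_V(x)=(T(x)+V)\cap Y$. Weakly convex graph: $T:X\to 2^Y$ ($X,Y$ nonempty convex) has weakly convex graph if for each finite set $\{x_1,\dots,x_n\}\subset X$ there exist $y_i\in T(x_i)$ such that $\mathrm{co}\{(x_1,y_1),\dots,(x_n,y_n)\}\subset\mathrm{Gr}(T)$, equivalently $\sum_i\lambda_iy_i\in T(\sum_i\lambda_ix_i)$ for all $(\lambda_1,\dots,\lambda_n)$ with $\lambda_i\ge0$, $\sum_i\lambda_i=1$. *-weakly convex graph: $T:X\to 2^Y$, with $Y\subset F$, has *-weakly convex graph if for each neighborhood $V$ of the origin in $F$ the correspondence $T_V$ has weakly convex graph. *)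

theory Defs
  imports "HOL-Analysis.Analysis"
begin

definition tvs_type :: "'a::{real_vector,topological_space} itself \<Rightarrow> bool" where
  "tvs_type _ \<longleftrightarrow>
     continuous_on UNIV (\<lambda>p::'a \<times> 'a. fst p + snd p) \<and>
     continuous_on UNIV (\<lambda>p::real \<times> 'a. fst p *\<^sub>R snd p)"

definition is_simplex :: "'a::real_vector set \<Rightarrow> bool" where
  "is_simplex K \<longleftrightarrow> (\<exists>S. finite S \<and> S \<noteq> {} \<and> \<not> affine_dependent S \<and> K = convex hull S)"

definition Gr :: "'a set \<Rightarrow> ('a \<Rightarrow> 'b set) \<Rightarrow> ('a \<times> 'b) set" where
  "Gr X T = {(x, y). x \<in> X \<and> y \<in> T x}"

definition cl_corr :: "'a::topological_space set \<Rightarrow> 'b::topological_space set \<Rightarrow>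
    ('a \<Rightarrow> 'b set) \<Rightarrow> 'a \<Rightarrow> 'b set" where
  "cl_corr X Y T x = {y \<in> Y. (x, y) \<in> closure (Gr X T) \<inter> (X \<times> Y)}"

definition corr_V :: "'b::real_vector set \<Rightarrow> ('a \<Rightarrow> 'b set) \<Rightarrow> 'b set \<Rightarrow> 'a \<Rightarrow> 'b set" where
  "corr_V Y T V x = {y + v | y v. y \<in> T x \<and> v \<in> V} \<inter> Y"

definition weakly_convex_graph :: "'a::real_vector set \<Rightarrow> 'b::real_vector set \<Rightarrow>
    ('a \<Rightarrow> 'b set) \<Rightarrow> bool" where
  "weakly_convex_graph X Y T \<longleftrightarrow>
     (\<forall>A. finite A \<and> A \<subseteq> X \<longrightarrow>
        (\<exists>y. (\<forall>x\<in>A. y x \<in> T x) \<and> convex hull ((\<lambda>x. (x, y x)) ` A) \<subseteq> Gr X T))"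

definition star_weakly_convex_graph :: "'a::real_vector set \<Rightarrow>
    'b::{real_vector,topological_space} set \<Rightarrow> ('a \<Rightarrow> 'b set) \<Rightarrow> bool" where
  "star_weakly_convex_graph X Y T \<longleftrightarrow>
     (\<forall>V. (\<exists>U. open U \<and> 0 \<in> U \<and> U \<subseteq> V) \<longrightarrow> weakly_convex_graph X Y (corr_V Y T V))"

end

theory Submission
  imports Defs
begin

(* If the closure of T had no fixed point, (x, x) would avoid the closed set cl Gr(T) for every
   x in the compact set K, and the tube lemma would give a neighbourhood V of 0 with
   (x, x - v) \<notin> cl Gr(T) for all x \<in> K and v \<in> V.  But T_V has a fixed point x = z + v with
   z \<in> T(x): weak convexity at the vertices s of K provides values y(s) \<in> T_V(s) whose
   barycentric coordinates form a stochastic matrix, and the barycentre weighted by a stationary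
   distribution of that matrix is mapped to itself.  Stationary distributions are obtained by
   censoring one state at a time. *)

definition stochastic_matrix_on :: "'i set \<Rightarrow> ('i \<Rightarrow> 'i \<Rightarrow> real) \<Rightarrow> bool" where
  "stochastic_matrix_on S P \<longleftrightarrow> (\<forall>i\<in>S. (\<forall>j\<in>S. 0 \<le> P i j) \<and> sum (P i) S = 1)"

definition stationary_distribution_on ::
    "'i set \<Rightarrow> ('i \<Rightarrow> 'i \<Rightarrow> real) \<Rightarrow> ('i \<Rightarrow> real) \<Rightarrow> bool" where
  "stationary_distribution_on S P p \<longleftrightarrow>
     (\<forall>i\<in>S. 0 \<le> p i) \<and> sum p S = 1 \<and> (\<forall>j\<in>S. (\<Sum>i\<in>S. p i * P i j) = p j)"

lemma stationary_distribution_on_normalize: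
  assumes "finite S" "\<forall>i\<in>S. 0 \<le> r i" "sum r S > 0"
    and "\<forall>j\<in>S. (\<Sum>i\<in>S. r i * P i j) = r j"
  shows "stationary_distribution_on S P (\<lambda>i. r i / sum r S)"
proof -
  have "(\<Sum>i\<in>S. r i / sum r S * P i j) = (\<Sum>i\<in>S. r i * P i j) / sum r S" for j
    by (simp add: sum_divide_distrib)
  with assms show ?thesis
    by (simp add: stationary_distribution_on_def sum_divide_distrib[symmetric])
qed

lemma stationary_distribution_on_absorbing:
  assumes "stochastic_matrix_on (insert n F) P" "n \<notin> F" "finite F" "P n n = 1"
  shows "stationary_distribution_on (insert n F) P (\<lambda>i. if i = n then 1 else 0)"
proof -
  have "sum (P n) F = 0"
    using assms by (simp add: stochastic_matrix_on_def)
  then have "\<forall>j\<in>F. P n j = 0"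
    using assms sum_nonneg_eq_0_iff[of F "P n"] by (auto simp: stochastic_matrix_on_def)
  moreover have "(\<Sum>i\<in>insert n F. (if i = n then 1 else 0) * P i j) = P n j" for j
    using assms(2,3) by (simp add: sum.neutral)
  ultimately show ?thesis
    using assms by (auto simp: stationary_distribution_on_def)
qed

text \<open>The chain watched only while it is in \<open>F\<close>: a visit to \<open>n\<close> is replaced by the
  state in which the chain next leaves \<open>n\<close>.\<close>
definition censored_chain :: "'i \<Rightarrow> ('i \<Rightarrow> 'i \<Rightarrow> real) \<Rightarrow> 'i \<Rightarrow> 'i \<Rightarrow> real" where
  "censored_chain n P i j = P i j + P i n * P n j / (1 - P n n)"

lemma stochastic_matrix_on_censored_chain:
  assumes "stochastic_matrix_on (insert n F) P" "n \<notin> F" "finite F" "P n n \<noteq> 1"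
  shows "stochastic_matrix_on F (censored_chain n P)"
proof -
  have row: "P i n + sum (P i) F = 1" if "i \<in> insert n F" for i
    using assms that by (auto simp: stochastic_matrix_on_def)
  have d: "sum (P n) F = 1 - P n n"
    using row[of n] by simp
  have "sum (P n) F \<ge> 0"
    using assms by (intro sum_nonneg) (auto simp: stochastic_matrix_on_def)
  with d assms(4) have dpos: "1 - P n n > 0" by linarith
  show ?thesis
    unfolding stochastic_matrix_on_def
  proof (intro ballI conjI)
    fix i j assume "i \<in> F" "j \<in> F"
    then show "0 \<le> censored_chain n P i j"
      using assms dpos by (auto simp: censored_chain_def stochastic_matrix_on_def)
  next
    fix i assume "i \<in> F"
    have "sum (censored_chain n P i) F = sum (P i) F + P i n * sum (P n) F / (1 - P n n)"
      by (simp add: censored_chain_def sum.distrib sum_distrib_left sum_divide_distrib)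
    also have "\<dots> = 1"
      using row[of i] \<open>i \<in> F\<close> d dpos by simp
    finally show "sum (censored_chain n P i) F = 1" .
  qed
qed

text \<open>A stationary distribution of the censored chain extends to one of the original
  chain by giving \<open>n\<close> the mass that flows into it, then renormalizing.\<close>
lemma stationary_distribution_on_uncensor:
  assumes "stochastic_matrix_on (insert n F) P" "n \<notin> F" "finite F" "P n n \<noteq> 1"
    and "stationary_distribution_on F (censored_chain n P) q"
  obtains p where "stationary_distribution_on (insert n F) P p"
proof -
  have "sum (P n) F = 1 - P n n" "sum (P n) F \<ge> 0"
    using assms(1-3) by (auto simp: stochastic_matrix_on_def intro!: sum_nonneg)
  with assms(4) have dpos: "1 - P n n > 0" by linarith
  define c where "c = (\<Sum>i\<in>F. q i * P i n) / (1 - P n n)"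
  define r where "r i = (if i = n then c else q i)" for i
  have q: "\<forall>i\<in>F. 0 \<le> q i" "sum q F = 1" "\<forall>j\<in>F. (\<Sum>i\<in>F. q i * censored_chain n P i j) = q j"
    using assms(5) by (auto simp: stationary_distribution_on_def)
  have "c \<ge> 0"
    unfolding c_def using assms(1) q(1) dpos
    by (intro divide_nonneg_pos sum_nonneg) (auto simp: stochastic_matrix_on_def)
  have r_sum: "(\<Sum>i\<in>insert n F. r i * g i) = c * g n + (\<Sum>i\<in>F. q i * g i)" for g
  proof -
    have "(\<Sum>i\<in>F. r i * g i) = (\<Sum>i\<in>F. q i * g i)"
      using assms(2) by (intro sum.cong) (auto simp: r_def)
    then show ?thesis
      using assms(2,3) by (simp add: r_def)
  qed
  have "\<forall>j\<in>insert n F. (\<Sum>i\<in>insert n F. r i * P i j) = r j"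
  proof
    fix j assume j: "j \<in> insert n F"
    show "(\<Sum>i\<in>insert n F. r i * P i j) = r j"
    proof (cases "j = n")
      case True
      have "(\<Sum>i\<in>F. q i * P i n) = c * (1 - P n n)"
        using dpos by (simp add: c_def)
      then show ?thesis
        using r_sum[of "\<lambda>i. P i n"] True by (simp add: r_def algebra_simps)
    next
      case False
      with j have "j \<in> F" by simp
      have "(\<Sum>i\<in>F. q i * censored_chain n P i j)
          = (\<Sum>i\<in>F. q i * P i j) + (\<Sum>i\<in>F. q i * P i n) * (P n j / (1 - P n n))"
        unfolding censored_chain_def sum_distrib_right
        by (simp add: distrib_left sum.distrib mult.assoc)
      also have "\<dots> = (\<Sum>i\<in>F. q i * P i j) + c * P n j"
        by (simp add: c_def)
      finally have "q j = (\<Sum>i\<in>F. q i * P i j) + c * P n j"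
        using q(3) \<open>j \<in> F\<close> by simp
      then show ?thesis
        using r_sum[of "\<lambda>i. P i j"] False by (simp add: r_def)
    qed
  qed
  moreover have "sum r (insert n F) = 1 + c"
    using r_sum[of "\<lambda>_. 1"] q(2) by simp
  moreover have "\<forall>i\<in>insert n F. 0 \<le> r i"
    using q(1) \<open>c \<ge> 0\<close> by (simp add: r_def)
  ultimately have "stationary_distribution_on (insert n F) P (\<lambda>i. r i / sum r (insert n F))"
    using \<open>c \<ge> 0\<close> assms(3) by (intro stationary_distribution_on_normalize) auto
  then show ?thesis
    by (rule that)
qed

theorem stochastic_matrix_has_stationary_distribution:
  assumes "finite S" "S \<noteq> {}" "stochastic_matrix_on S P"
  obtains p where "stationary_distribution_on S P p"
proof -
  have "\<exists>p. stationary_distribution_on S P p"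
    using assms
  proof (induction S arbitrary: P rule: finite_ne_induct)
    case (singleton n)
    then show ?case
      by (auto simp: stochastic_matrix_on_def stationary_distribution_on_def)
  next
    case (insert n F)
    show ?case
    proof (cases "P n n = 1")
      case True
      with insert.hyps insert.prems show ?thesis
        by (blast intro: stationary_distribution_on_absorbing)
    next
      case False
      have "stochastic_matrix_on F (censored_chain n P)"
        using insert.hyps insert.prems False by (simp add: stochastic_matrix_on_censored_chain)
      with insert.IH obtain q where "stationary_distribution_on F (censored_chain n P) q"
        by blast
      with insert.hyps insert.prems False show ?thesis
        by (blast intro: stationary_distribution_on_uncensor)
    qed
  qed
  with that show ?thesis
    by blast
qed

lemma tvs_continuous_on_add:
  fixes f g :: "'b::topological_space \<Rightarrow> 'a::{real_vector,topological_space}"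
  assumes "tvs_type TYPE('a)" "continuous_on X f" "continuous_on X g"
  shows "continuous_on X (\<lambda>x. f x + g x)"
proof -
  have "continuous_on UNIV (\<lambda>p::'a \<times> 'a. fst p + snd p)"
    using assms(1) unfolding tvs_type_def by blast
  from continuous_on_compose2[OF this continuous_on_Pair[OF assms(2,3)]] show ?thesis
    by simp
qed

lemma tvs_continuous_on_scaleR:
  fixes f :: "'b::topological_space \<Rightarrow> real" and g :: "'b \<Rightarrow> 'a::{real_vector,topological_space}"
  assumes "tvs_type TYPE('a)" "continuous_on X f" "continuous_on X g"
  shows "continuous_on X (\<lambda>x. f x *\<^sub>R g x)"
proof -
  have "continuous_on UNIV (\<lambda>p::real \<times> 'a. fst p *\<^sub>R snd p)"
    using assms(1) unfolding tvs_type_def by blast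
  from continuous_on_compose2[OF this continuous_on_Pair[OF assms(2,3)]] show ?thesis
    by simp
qed

lemma tvs_continuous_on_diff:
  fixes f g :: "'b::topological_space \<Rightarrow> 'a::{real_vector,topological_space}"
  assumes "tvs_type TYPE('a)" "continuous_on X f" "continuous_on X g"
  shows "continuous_on X (\<lambda>x. f x - g x)"
proof -
  have "continuous_on X (\<lambda>x. f x + (-1) *\<^sub>R g x)"
    using assms by (intro tvs_continuous_on_add tvs_continuous_on_scaleR continuous_on_const)
  then show ?thesis
    by simp
qed

lemma tvs_continuous_on_sum:
  fixes f :: "'c \<Rightarrow> 'b::topological_space \<Rightarrow> 'a::{real_vector,topological_space}"
  assumes "tvs_type TYPE('a)" "finite I" "\<And>i. i \<in> I \<Longrightarrow> continuous_on X (f i)"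
  shows "continuous_on X (\<lambda>x. \<Sum>i\<in>I. f i x)"
  using assms(2,3)
  by (induction I rule: finite_induct)
    (simp_all add: continuous_on_const tvs_continuous_on_add[OF assms(1)])

definition convex_coefficients :: "'b set \<Rightarrow> ('b \<Rightarrow> real) set" where
  "convex_coefficients S = {u. (\<forall>s. s \<notin> S \<longrightarrow> u s = 0) \<and> (\<forall>s\<in>S. 0 \<le> u s) \<and> sum u S = 1}"

lemma compact_convex_coefficients:
  assumes "finite S"
  shows "compact (convex_coefficients S)"
proof -
  define B where "B s = (if s \<in> S then {0..1} else {0::real})" for s
  have "compactin (product_topology (\<lambda>_. euclidean) UNIV) (PiE UNIV B)"
    unfolding compactin_PiE by (auto simp: B_def compactin_euclidean_iff)
  then have "compact (PiE UNIV B)"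
    by (simp add: euclidean_product_topology compactin_euclidean_iff)
  moreover have "closed {u::_ \<Rightarrow> real. sum u S = 1}"
    by (intro closed_Collect_eq continuous_on_sum continuous_on_product_coordinates
        continuous_on_const)
  moreover have "convex_coefficients S = PiE UNIV B \<inter> {u. sum u S = 1}"
  proof (intro set_eqI iffI)
    fix u assume u: "u \<in> convex_coefficients S"
    then have "u s \<le> 1" if "s \<in> S" for s
      using member_le_sum[of s S u] assms that by (auto simp: convex_coefficients_def)
    with u show "u \<in> PiE UNIV B \<inter> {u. sum u S = 1}"
      by (auto simp: convex_coefficients_def B_def PiE_iff)
  qed (auto simp: convex_coefficients_def B_def PiE_iff split: if_splits)
  ultimately show ?thesis
    by (simp add: compact_Int_closed)
qed

lemma convex_hull_finite_eq_image_convex_coefficients: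
  fixes S :: "'a::real_vector set"
  assumes "finite S"
  shows "convex hull S = (\<lambda>u. \<Sum>s\<in>S. u s *\<^sub>R s) ` convex_coefficients S"
proof (intro set_eqI iffI)
  fix x assume "x \<in> convex hull S"
  then obtain u where u: "\<forall>s\<in>S. 0 \<le> u s" "sum u S = 1" "(\<Sum>s\<in>S. u s *\<^sub>R s) = x"
    using convex_hull_finite[OF assms] by auto
  define u' where "u' s = (if s \<in> S then u s else 0)" for s
  have "u' \<in> convex_coefficients S" "(\<Sum>s\<in>S. u' s *\<^sub>R s) = x"
    using u by (auto simp: u'_def convex_coefficients_def)
  then show "x \<in> (\<lambda>u. \<Sum>s\<in>S. u s *\<^sub>R s) ` convex_coefficients S"
    by force
qed (use assms in \<open>auto simp: convex_hull_finite convex_coefficients_def\<close>)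

lemma tvs_compact_convex_hull:
  fixes S :: "'a::{real_vector,topological_space} set"
  assumes "tvs_type TYPE('a)" "finite S"
  shows "compact (convex hull S)"
proof -
  have "continuous_on UNIV (\<lambda>u. \<Sum>s\<in>S. u s *\<^sub>R s)"
    using assms(1,2) continuous_on_product_coordinates continuous_on_const
    by (intro tvs_continuous_on_sum tvs_continuous_on_scaleR)
  then show ?thesis
    unfolding convex_hull_finite_eq_image_convex_coefficients[OF assms(2)]
    by (meson compact_continuous_image compact_convex_coefficients[OF assms(2)]
        continuous_on_subset subset_UNIV)
qed

lemma stationary_distribution_on_sum_scaleR:
  fixes f :: "'i \<Rightarrow> 'a::real_vector"
  assumes "finite S" "stationary_distribution_on S P p"
  shows "(\<Sum>i\<in>S. p i *\<^sub>R (\<Sum>j\<in>S. P i j *\<^sub>R f j)) = (\<Sum>j\<in>S. p j *\<^sub>R f j)"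
proof -
  have "(\<Sum>i\<in>S. p i *\<^sub>R (\<Sum>j\<in>S. P i j *\<^sub>R f j))
      = (\<Sum>i\<in>S. \<Sum>j\<in>S. (p i * P i j) *\<^sub>R f j)"
    by (simp add: scaleR_sum_right)
  also have "\<dots> = (\<Sum>j\<in>S. \<Sum>i\<in>S. (p i * P i j) *\<^sub>R f j)"
    by (rule sum.swap)
  also have "\<dots> = (\<Sum>j\<in>S. (\<Sum>i\<in>S. p i * P i j) *\<^sub>R f j)"
    by (simp add: scaleR_sum_left)
  also have "\<dots> = (\<Sum>j\<in>S. p j *\<^sub>R f j)"
    using assms(2) by (simp add: stationary_distribution_on_def)
  finally show ?thesis .
qed

lemma weakly_convex_graph_has_fixed_point:
  fixes S :: "'a::real_vector set"
  assumes "finite S" "S \<noteq> {}" "\<forall>x\<in>convex hull S. T x \<subseteq> convex hull S"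
    and "weakly_convex_graph (convex hull S) Y T"
  shows "\<exists>x\<in>convex hull S. x \<in> T x"
proof -
  obtain y where y: "\<forall>s\<in>S. y s \<in> T s"
    and hull: "convex hull ((\<lambda>s. (s, y s)) ` S) \<subseteq> Gr (convex hull S) T"
    using assms(1,4) hull_subset[of S convex] unfolding weakly_convex_graph_def by blast
  have "\<forall>s\<in>S. y s \<in> convex hull S"
    using y assms(3) hull_subset[of S convex] by blast
  then have "\<forall>s\<in>S. \<exists>u. (\<forall>t\<in>S. 0 \<le> u t) \<and> sum u S = 1 \<and> (\<Sum>t\<in>S. u t *\<^sub>R t) = y s"
    by (simp add: convex_hull_finite[OF assms(1)])
  then obtain P where
    P: "\<forall>s\<in>S. (\<forall>t\<in>S. 0 \<le> P s t) \<and> sum (P s) S = 1 \<and> (\<Sum>t\<in>S. P s t *\<^sub>R t) = y s"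
    by metis
  then have "stochastic_matrix_on S P"
    by (simp add: stochastic_matrix_on_def)
  then obtain p where p: "stationary_distribution_on S P p"
    by (rule stochastic_matrix_has_stationary_distribution[OF assms(1,2)])
  define x where "x = (\<Sum>s\<in>S. p s *\<^sub>R s)"
  have "(\<Sum>s\<in>S. p s *\<^sub>R y s) = x"
    using stationary_distribution_on_sum_scaleR[OF assms(1) p, of id] P
    by (simp add: x_def)
  then have "(\<Sum>s\<in>S. p s *\<^sub>R (s, y s)) = (x, x)"
    by (simp add: x_def fst_sum snd_sum prod_eq_iff)
  moreover have "(\<Sum>s\<in>S. p s *\<^sub>R (s, y s)) \<in> convex hull ((\<lambda>s. (s, y s)) ` S)"
    using p assms(1) by (intro convex_sum) (auto simp: stationary_distribution_on_def hull_inc)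
  ultimately have "(x, x) \<in> Gr (convex hull S) T"
    using hull by auto
  then show ?thesis
    by (auto simp: Gr_def)
qed

theorem theorem6:
  fixes K :: "'a::{real_vector,topological_space} set"
    and T :: "'a \<Rightarrow> 'a set"
  assumes "tvs_type TYPE('a)"
    and "is_simplex K"
    and "\<forall>x\<in>K. T x \<subseteq> K"
    and "star_weakly_convex_graph K K T"
  shows "\<exists>x\<in>K. x \<in> cl_corr K K T x"
proof (rule ccontr)
  assume no_fixed_point: "\<not> (\<exists>x\<in>K. x \<in> cl_corr K K T x)"
  obtain S where S: "finite S" "S \<noteq> {}" "K = convex hull S"
    using assms(2) unfolding is_simplex_def by blast
  define W where "W = {(v, x). (x, x - v) \<notin> closure (Gr K T)}"
  have W_open: "open W"
  proof -
    have "continuous_on UNIV (\<lambda>(v, x). (x, x - v :: 'a))"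
      using assms(1) by (simp add: case_prod_unfold continuous_on_fst continuous_on_snd
          continuous_on_Pair tvs_continuous_on_diff)
    moreover have "W = (\<lambda>(v, x). (x, x - v)) -` (- closure (Gr K T))"
      by (auto simp: W_def)
    ultimately show ?thesis
      by (metis open_vimage open_Compl closed_closure)
  qed
  have zero_K_W: "{0} \<times> K \<subseteq> W"
    using no_fixed_point by (auto simp: W_def cl_corr_def)
  have "compact K"
    using tvs_compact_convex_hull[OF assms(1) S(1)] S(3) by simp
  then obtain V where V: "0 \<in> V" "open V" "V \<times> K \<subseteq> W"
    using Elementary_Topology.tube_lemma[OF _ W_open zero_K_W] by blast
  have "weakly_convex_graph K K (corr_V K T V)"
    using assms(4) V(1,2) unfolding star_weakly_convex_graph_def by blast
  moreover have "\<forall>x\<in>K. corr_V K T V x \<subseteq> K"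
    by (auto simp: corr_V_def)
  ultimately obtain x where "x \<in> K" "x \<in> corr_V K T V x"
    using weakly_convex_graph_has_fixed_point[OF S(1,2), of "corr_V K T V" K]
    unfolding S(3) by blast
  then obtain z v where "x = z + v" "z \<in> T x" "v \<in> V"
    by (auto simp: corr_V_def)
  then have "(x, x - v) \<in> Gr K T"
    using \<open>x \<in> K\<close> by (simp add: Gr_def)
  moreover have "(v, x) \<in> W"
    using V(3) \<open>v \<in> V\<close> \<open>x \<in> K\<close> by blast
  ultimately show False
    using closure_subset unfolding W_def by blast
qed

end
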